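(* Let $G$ be a profinite group. Then the following are equivalent: (i) every closed subgroup of $G$ has a closed permutable complement in $G$; (ii) every closed subgroup of $G$ has a permutable complement in $G$; (iii) every open subgroup of $G$ has a permutable complement in $G$; (iv) every open subgroup of $G$ has a closed permutable complement in $G$; (v) if $\mathcal{N}$ is a fundamental system of neighborhoods of the identity consisting of open normal subgroups of $G$, then $G/N$ is a $C$-group for every $N\in\mathcal{N}$; (vi) $G$ is an inverse limit of finite $C$-groups.
   Context: For a group $G$ and a subgroup $H\le G$, a permutable complement of $H$ in $G$ is a subgroup $K\le G$ with $G=HK$ and $H\cap K=1$. A group $G$ is a $C$-group if every subgroup of $G$ has a permutable complement in $G$. *)

theory Defs
  imports "HOL-Algebra.Algebra" "HOL-Analysis.Analysis"
begin

definition perm_complement :: "('a, 'c) monoid_scheme \<Rightarrow> 'a set \<Rightarrow> 'a set \<Rightarrow> bool" where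
  "perm_complement G H K \<longleftrightarrow>
     subgroup K G \<and> H <#>\<^bsub>G\<^esub> K = carrier G \<and> H \<inter> K = {\<one>\<^bsub>G\<^esub>}"

definition C_group :: "('a, 'c) monoid_scheme \<Rightarrow> bool" where
  "C_group G \<longleftrightarrow> group G \<and> (\<forall>H. subgroup H G \<longrightarrow> (\<exists>K. perm_complement G H K))"

definition topological_group :: "('a, 'c) monoid_scheme \<Rightarrow> 'a topology \<Rightarrow> bool" where
  "topological_group G T \<longleftrightarrow> group G \<and> topspace T = carrier G \<and>
     continuous_map (prod_topology T T) T (\<lambda>(x, y). x \<otimes>\<^bsub>G\<^esub> y) \<and>
     continuous_map T T (\<lambda>x. inv\<^bsub>G\<^esub> x)"

definition totally_disconnected_space :: "'a topology \<Rightarrow> bool" where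
  "totally_disconnected_space T \<longleftrightarrow> (\<forall>S. connectedin T S \<longrightarrow> (\<exists>a. S \<subseteq> {a}))"

definition profinite_group :: "('a, 'c) monoid_scheme \<Rightarrow> 'a topology \<Rightarrow> bool" where
  "profinite_group G T \<longleftrightarrow> topological_group G T \<and> compact_space T \<and>
     Hausdorff_space T \<and> totally_disconnected_space T"

definition inverse_system ::
  "'i set \<Rightarrow> ('i \<Rightarrow> 'i \<Rightarrow> bool) \<Rightarrow> ('i \<Rightarrow> 'b monoid) \<Rightarrow> ('i \<Rightarrow> 'i \<Rightarrow> 'b \<Rightarrow> 'b) \<Rightarrow> bool" where
  "inverse_system I leq Gs f \<longleftrightarrow>
     I \<noteq> {} \<and>
     (\<forall>i\<in>I. leq i i) \<and>
     (\<forall>i\<in>I. \<forall>j\<in>I. \<forall>k\<in>I. leq i j \<longrightarrow> leq j k \<longrightarrow> leq i k) \<and>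
     (\<forall>i\<in>I. \<forall>j\<in>I. \<exists>k\<in>I. leq i k \<and> leq j k) \<and>
     (\<forall>i\<in>I. group (Gs i)) \<and>
     (\<forall>i\<in>I. \<forall>j\<in>I. leq i j \<longrightarrow> f i j \<in> hom (Gs j) (Gs i)) \<and>
     (\<forall>i\<in>I. \<forall>x\<in>carrier (Gs i). f i i x = x) \<and>
     (\<forall>i\<in>I. \<forall>j\<in>I. \<forall>k\<in>I. leq i j \<longrightarrow> leq j k \<longrightarrow>
        (\<forall>x\<in>carrier (Gs k). f i j (f j k x) = f i k x))"

definition inv_lim_carrier ::
  "'i set \<Rightarrow> ('i \<Rightarrow> 'i \<Rightarrow> bool) \<Rightarrow> ('i \<Rightarrow> 'b monoid) \<Rightarrow> ('i \<Rightarrow> 'i \<Rightarrow> 'b \<Rightarrow> 'b) \<Rightarrow> ('i \<Rightarrow> 'b) set" where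
  "inv_lim_carrier I leq Gs f =
     {x \<in> PiE I (\<lambda>i. carrier (Gs i)). \<forall>i\<in>I. \<forall>j\<in>I. leq i j \<longrightarrow> f i j (x j) = x i}"

definition inv_lim_group ::
  "'i set \<Rightarrow> ('i \<Rightarrow> 'i \<Rightarrow> bool) \<Rightarrow> ('i \<Rightarrow> 'b monoid) \<Rightarrow> ('i \<Rightarrow> 'i \<Rightarrow> 'b \<Rightarrow> 'b) \<Rightarrow> ('i \<Rightarrow> 'b) monoid" where
  "inv_lim_group I leq Gs f =
     \<lparr>carrier = inv_lim_carrier I leq Gs f,
      monoid.mult = (\<lambda>x y. \<lambda>i\<in>I. x i \<otimes>\<^bsub>Gs i\<^esub> y i),
      monoid.one = (\<lambda>i\<in>I. \<one>\<^bsub>Gs i\<^esub>)\<rparr>"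

definition inv_lim_topology ::
  "'i set \<Rightarrow> ('i \<Rightarrow> 'i \<Rightarrow> bool) \<Rightarrow> ('i \<Rightarrow> 'b monoid) \<Rightarrow> ('i \<Rightarrow> 'i \<Rightarrow> 'b \<Rightarrow> 'b) \<Rightarrow> ('i \<Rightarrow> 'b) topology" where
  "inv_lim_topology I leq Gs f =
     subtopology (product_topology (\<lambda>i. discrete_topology (carrier (Gs i))) I)
                 (inv_lim_carrier I leq Gs f)"

definition inv_lim_of_finite_C_groups ::
  "'a monoid \<Rightarrow> 'a topology \<Rightarrow> 'i itself \<Rightarrow> 'b itself \<Rightarrow> bool" where
  "inv_lim_of_finite_C_groups G T (_::'i itself) (_::'b itself) \<longleftrightarrow>
     (\<exists>(I::'i set) leq (Gs::'i \<Rightarrow> 'b monoid) f.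
        inverse_system I leq Gs f \<and>
        (\<forall>i\<in>I. finite (carrier (Gs i)) \<and> C_group (Gs i)) \<and>
        (\<exists>\<phi>. \<phi> \<in> iso G (inv_lim_group I leq Gs f) \<and>
             homeomorphic_map T (inv_lim_topology I leq Gs f) \<phi>))"

end

theory Submission
  imports Defs
begin

text \<open>
  In a profinite group the open subgroups are closed and of finite index, and the open normal
  subgroups form a basis of neighbourhoods of the identity. A subgroup of a quotient \<open>G/N\<close> by
  an open normal subgroup lifts to an open subgroup of \<open>G\<close>, and the image of a permutable
  complement of the lift is a permutable complement in \<open>G/N\<close>; so each of (i)--(iv) makes all
  these finite quotients C-groups.

  Conversely, suppose that \<open>G\<close> is separated by continuous homomorphisms onto discrete C-groups,
  as it is by its quotients in (v) and by the projections of an inverse limit as in (vi). By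
  compactness and Zorn's lemma a closed subgroup \<open>H\<close> has a minimal closed supplement \<open>K\<close>. If
  \<open>H \<inter> K\<close> contained some \<open>x \<noteq> 1\<close>, choose such a homomorphism \<open>\<psi>\<close> with \<open>\<psi> x \<noteq> 1\<close> and a
  complement \<open>L'\<close> of \<open>\<psi> (H \<inter> K)\<close>; then \<open>K \<inter> \<psi>\<inverse>(L')\<close> would be a smaller closed supplement.
  So \<open>K\<close> is a closed permutable complement of \<open>H\<close>.

  Finally \<open>G\<close> is the inverse limit of its quotients by open normal subgroups: the canonical map
  is injective since these subgroups intersect trivially, surjective by compactness, and a
  homeomorphism because \<open>G\<close> is compact and the limit is Hausdorff.
\<close>

section \<open>Permutable complements and quotient groups\<close>

lemma (in group_hom) subgroup_vimage:
  assumes "subgroup L H"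
  shows "subgroup (carrier G \<inter> h -` L) G"
proof (rule G.subgroupI)
  show "carrier G \<inter> h -` L \<noteq> {}"
    using assms subgroup.one_closed by fastforce
qed (use assms in \<open>auto simp: subgroup.m_closed subgroup.m_inv_closed\<close>)

context group
begin

lemma normal_core:
  assumes "subgroup H G"
  shows "{x \<in> carrier G. \<forall>c \<in> carrier G. c \<otimes> x \<otimes> inv c \<in> H} \<lhd> G"
    (is "?N \<lhd> G")
proof (rule normal_invI)
  have conj_mult: "c \<otimes> (x \<otimes> y) \<otimes> inv c = (c \<otimes> x \<otimes> inv c) \<otimes> (c \<otimes> y \<otimes> inv c)"
    if "c \<in> carrier G" "x \<in> carrier G" "y \<in> carrier G" for c x y
    using that by (simp add: m_assoc) (simp add: m_assoc [symmetric])
  have conj_inv: "c \<otimes> inv x \<otimes> inv c = inv (c \<otimes> x \<otimes> inv c)"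
    if "c \<in> carrier G" "x \<in> carrier G" for c x
    using that by (simp add: m_assoc inv_mult_group)
  have "\<one> \<in> ?N"
    using assms by (simp add: subgroup.one_closed)
  then show "subgroup ?N G"
    using assms
    by (intro subgroupI) (auto simp: conj_mult conj_inv subgroup.m_closed subgroup.m_inv_closed)
  show "x \<otimes> h \<otimes> inv x \<in> ?N" if "x \<in> carrier G" "h \<in> ?N" for x h
  proof -
    have "c \<otimes> (x \<otimes> h \<otimes> inv x) \<otimes> inv c = (c \<otimes> x) \<otimes> h \<otimes> inv (c \<otimes> x)" if "c \<in> carrier G" for c
      using that \<open>x \<in> carrier G\<close> \<open>h \<in> ?N\<close> by (simp add: m_assoc inv_mult_group)
    then show ?thesis using that by auto
  qed
qed

lemma set_mult_rcos_absorb: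
  assumes "subgroup N G" "subgroup M G" "M \<subseteq> N" "g \<in> carrier G"
  shows "N <#> (M #> g) = N #> g"
proof -
  have "N <#> M = N"
    using assms by (simp add: set_mult_subgroup_idem subgroup_incl)
  then show ?thesis
    using assms by (simp add: setmult_rcos_assoc subgroup.subset)
qed

lemma FactGroup_projection_hom:
  assumes M: "M \<lhd> G" and N: "N \<lhd> G" and "M \<subseteq> N"
  shows "(\<lambda>C. N <#> C) \<in> hom (G Mod M) (G Mod N)"
proof -
  have absorb: "N <#> (M #> g) = N #> g" if "g \<in> carrier G" for g
    using assms that by (simp add: set_mult_rcos_absorb normal_imp_subgroup)
  show ?thesis
    unfolding hom_def
  proof (intro CollectI conjI ballI)
    show "(\<lambda>C. N <#> C) \<in> carrier (G Mod M) \<rightarrow> carrier (G Mod N)"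
      by (auto simp: carrier_FactGroup absorb)
    fix C D assume "C \<in> carrier (G Mod M)" "D \<in> carrier (G Mod M)"
    then obtain a b where "a \<in> carrier G" "C = M #> a" "b \<in> carrier G" "D = M #> b"
      by (auto simp: carrier_FactGroup)
    then show "N <#> (C \<otimes>\<^bsub>G Mod M\<^esub> D) = (N <#> C) \<otimes>\<^bsub>G Mod N\<^esub> (N <#> D)"
      using M N by (simp add: absorb normal.rcos_sum)
  qed
qed

lemma subgroup_rcos_stabilizer:
  assumes "V \<subseteq> carrier G"
  shows "subgroup {g \<in> carrier G. V #> g = V} G"
proof (rule subgroupI)
  show "{g \<in> carrier G. V #> g = V} \<noteq> {}"
    using assms coset_mult_one by blast
  fix a b assume a: "a \<in> {g \<in> carrier G. V #> g = V}" and b: "b \<in> {g \<in> carrier G. V #> g = V}"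
  have "V #> inv a = (V #> a) #> inv a"
    using a by simp
  also have "\<dots> = V"
    using a assms by (subst coset_mult_assoc) (auto simp: coset_mult_one)
  finally show "inv a \<in> {g \<in> carrier G. V #> g = V}"
    using a by simp
  show "a \<otimes> b \<in> {g \<in> carrier G. V #> g = V}"
    using a b assms by (simp flip: coset_mult_assoc)
qed auto

lemma supplement_Int_vimage:
  assumes H: "subgroup H G" and K: "subgroup K G" and HK: "H <#> K = carrier G"
    and \<psi>: "group_hom G Q \<psi>" and L': "subgroup L' Q" "\<psi> ` (H \<inter> K) <#>\<^bsub>Q\<^esub> L' = carrier Q"
  shows "H <#> (K \<inter> \<psi> -` L') = carrier G"
proof
  interpret \<psi>: group_hom G Q \<psi>
    by (rule \<psi>)
  show "H <#> (K \<inter> \<psi> -` L') \<subseteq> carrier G"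
    using H K by (auto simp: set_mult_def subgroup.mem_carrier)
  show "carrier G \<subseteq> H <#> (K \<inter> \<psi> -` L')"
  proof
    fix g assume "g \<in> carrier G"
    then have "g \<in> H <#> K"
      using HK by simp
    then obtain h k where hk: "h \<in> H" "k \<in> K" "g = h \<otimes> k"
      unfolding set_mult_def by blast
    have "\<psi> k \<in> carrier Q"
      using hk K by (simp add: subgroup.mem_carrier)
    then obtain d l' where d: "d \<in> H" "d \<in> K" and l': "l' \<in> L'" "\<psi> k = \<psi> d \<otimes>\<^bsub>Q\<^esub> l'"
      using L'(2) unfolding set_mult_def by blast
    have carrier: "h \<in> carrier G" "k \<in> carrier G" "d \<in> carrier G" "l' \<in> carrier Q"
      using hk d l' H K L'(1) by (auto simp: subgroup.mem_carrier)
    have "\<psi> (inv d \<otimes> k) = l'"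
      using carrier l'(2) by (simp add: \<psi>.H.m_assoc [symmetric])
    then have "inv d \<otimes> k \<in> K \<inter> \<psi> -` L'"
      using hk d K l'(1) by (auto simp: subgroup.m_closed subgroup.m_inv_closed)
    moreover have "h \<otimes> d \<in> H"
      using hk d H by (simp add: subgroup.m_closed)
    moreover have "g = (h \<otimes> d) \<otimes> (inv d \<otimes> k)"
    proof -
      have "d \<otimes> (inv d \<otimes> k) = k"
        using carrier by (simp add: m_assoc [symmetric])
      then show ?thesis
        using carrier hk(3) by (simp add: m_assoc)
    qed
    ultimately show "g \<in> H <#> (K \<inter> \<psi> -` L')"
      unfolding set_mult_def by (auto simp del: vimage_Int)
  qed
qed

lemma supplement_shrink_by_complement:
  assumes H: "subgroup H G" and K: "subgroup K G" and HK: "H <#> K = carrier G"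
    and Q: "C_group Q" and \<psi>: "\<psi> \<in> hom G Q"
  obtains L' where "subgroup L' Q" and "H <#> (K \<inter> \<psi> -` L') = carrier G"
    and "\<And>x. x \<in> H \<inter> K \<inter> \<psi> -` L' \<Longrightarrow> \<psi> x = \<one>\<^bsub>Q\<^esub>"
proof -
  have hom: "group_hom G Q \<psi>"
    using Q \<psi> by (simp add: C_group_def group_hom_def group_hom_axioms_def group_axioms)
  obtain L' where L': "subgroup L' Q" "\<psi> ` (H \<inter> K) <#>\<^bsub>Q\<^esub> L' = carrier Q"
      "\<psi> ` (H \<inter> K) \<inter> L' = {\<one>\<^bsub>Q\<^esub>}"
    using Q group_hom.subgroup_img_is_subgroup[OF hom subgroups_Inter_pair[OF H K]]
    unfolding C_group_def perm_complement_def by blast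
  moreover have "\<psi> x = \<one>\<^bsub>Q\<^esub>" if "x \<in> H \<inter> K \<inter> \<psi> -` L'" for x
    using that L'(3) by auto
  ultimately show ?thesis
    using that supplement_Int_vimage[OF H K HK hom] by blast
qed

end

context normal
begin

lemma set_mult_FactGroup_rcos_image:
  assumes S: "subgroup S (G Mod H)" and K: "subgroup K G" and SK: "\<Union>S <#> K = carrier G"
  shows "S <#>\<^bsub>G Mod H\<^esub> (\<lambda>a. H #> a) ` K = carrier (G Mod H)"
proof
  interpret M: group "G Mod H"
    by (rule factorgroup_is_group)
  interpret \<pi>: group_hom G "G Mod H" "\<lambda>a. H #> a"
    using r_coset_hom_Mod by unfold_locales
  show "S <#>\<^bsub>G Mod H\<^esub> (\<lambda>a. H #> a) ` K \<subseteq> carrier (G Mod H)"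
    using S \<pi>.subgroup_img_is_subgroup[OF K] unfolding set_mult_def
    by (blast intro: M.m_closed subgroup.mem_carrier)
  have union: "\<Union>S = {x \<in> carrier G. H #> x \<in> S}"
    by (rule factgroup_subgroup_union_char[OF S])
  show "carrier (G Mod H) \<subseteq> S <#>\<^bsub>G Mod H\<^esub> (\<lambda>a. H #> a) ` K"
  proof
    fix E assume "E \<in> carrier (G Mod H)"
    then obtain g where g: "g \<in> carrier G" "E = H #> g"
      by (auto simp: carrier_FactGroup)
    then have "g \<in> \<Union>S <#> K"
      using SK by simp
    then obtain u k where uk: "u \<in> \<Union>S" "k \<in> K" "g = u \<otimes> k"
      unfolding set_mult_def by blast
    then have "u \<in> carrier G" "k \<in> carrier G"
      using K union by (auto simp: subgroup.mem_carrier)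
    then have "E = (H #> u) \<otimes>\<^bsub>G Mod H\<^esub> (H #> k)"
      using g uk by (simp only: mult_FactGroup rcos_sum)
    moreover have "H #> u \<in> S" "H #> k \<in> (\<lambda>a. H #> a) ` K"
      using uk union by auto
    ultimately show "E \<in> S <#>\<^bsub>G Mod H\<^esub> (\<lambda>a. H #> a) ` K"
      unfolding set_mult_def by blast
  qed
qed

lemma perm_complement_FactGroup:
  assumes S: "subgroup S (G Mod H)" and K: "perm_complement G (\<Union>S) K"
  shows "perm_complement (G Mod H) S ((\<lambda>a. H #> a) ` K)"
proof -
  have Ksub: "subgroup K G" and SK: "\<Union>S <#> K = carrier G" and SKi: "\<Union>S \<inter> K = {\<one>}"
    using K unfolding perm_complement_def by auto
  interpret M: group "G Mod H"
    by (rule factorgroup_is_group)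
  interpret \<pi>: group_hom G "G Mod H" "\<lambda>a. H #> a"
    using r_coset_hom_Mod by unfold_locales
  have K': "subgroup ((\<lambda>a. H #> a) ` K) (G Mod H)"
    using \<pi>.subgroup_img_is_subgroup[OF Ksub] .
  have "S \<inter> (\<lambda>a. H #> a) ` K = {\<one>\<^bsub>G Mod H\<^esub>}"
  proof (intro equalityI subsetI)
    fix C assume "C \<in> S \<inter> (\<lambda>a. H #> a) ` K"
    then obtain k where k: "k \<in> K" "C = H #> k" "H #> k \<in> S"
      by auto
    then have "k \<in> \<Union>S \<inter> K"
      using factgroup_subgroup_union_char[OF S] Ksub by (simp add: subgroup.mem_carrier)
    then have "k = \<one>"
      using SKi by blast
    then show "C \<in> {\<one>\<^bsub>G Mod H\<^esub>}"
      using k(2) by (simp add: coset_mult_one)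
  next
    have "\<one>\<^bsub>G Mod H\<^esub> \<in> S" "\<one>\<^bsub>G Mod H\<^esub> \<in> (\<lambda>a. H #> a) ` K"
      using subgroup.one_closed[OF S] subgroup.one_closed[OF K'] by auto
    then show "C \<in> S \<inter> (\<lambda>a. H #> a) ` K" if "C \<in> {\<one>\<^bsub>G Mod H\<^esub>}" for C
      using that by blast
  qed
  then show ?thesis
    unfolding perm_complement_def using K' set_mult_FactGroup_rcos_image[OF S Ksub SK] by blast
qed

lemma C_group_FactGroupI:
  assumes "\<And>K. subgroup K G \<Longrightarrow> H \<subseteq> K \<Longrightarrow> \<exists>L. perm_complement G K L"
  shows "C_group (G Mod H)"
  unfolding C_group_def
proof (intro conjI allI impI factorgroup_is_group)
  fix S assume S: "subgroup S (G Mod H)"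
  have "H \<subseteq> \<Union>S"
    using subgroup.one_closed[OF S] by auto
  then obtain L where "perm_complement G (\<Union>S) L"
    using assms factgroup_subgroup_union_subgroup[OF S] by blast
  then show "\<exists>K. perm_complement (G Mod H) S K"
    using perm_complement_FactGroup[OF S] by blast
qed

end

section \<open>Inverse limits of quotient groups\<close>

lemma inv_lim_projection_hom:
  assumes "i \<in> I"
  shows "(\<lambda>x. x i) \<in> hom (inv_lim_group I leq Gs f) (Gs i)"
  using assms unfolding hom_def inv_lim_group_def inv_lim_carrier_def by auto

lemma continuous_map_inv_lim_projection:
  assumes "i \<in> I"
  shows "continuous_map (inv_lim_topology I leq Gs f) (discrete_topology (carrier (Gs i)))
    (\<lambda>x. x i)"
  unfolding inv_lim_topology_def
  by (rule continuous_map_from_subtopology[OF continuous_map_product_projection[OF assms]])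

lemma Hausdorff_space_inv_lim_topology: "Hausdorff_space (inv_lim_topology I leq Gs f)"
  unfolding inv_lim_topology_def
  by (intro Hausdorff_space_subtopology) (simp add: Hausdorff_space_product_topology)

context group
begin

lemma inverse_system_FactGroup:
  assumes ne: "I \<noteq> {}" and normal: "\<And>N. N \<in> I \<Longrightarrow> N \<lhd> G"
    and Int: "\<And>M N. M \<in> I \<Longrightarrow> N \<in> I \<Longrightarrow> M \<inter> N \<in> I"
  shows "inverse_system I (\<lambda>N M. M \<subseteq> N) (\<lambda>N. G Mod N) (\<lambda>N M C. N <#> C)"
  unfolding inverse_system_def
proof (intro conjI ballI impI)
  show "\<exists>K\<in>I. K \<subseteq> N \<and> K \<subseteq> M" if "N \<in> I" "M \<in> I" for N M
    by (rule bexI[OF _ Int[OF that]]) auto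
  show "group (G Mod N)" if "N \<in> I" for N
    using normal[OF that] by (rule normal.factorgroup_is_group)
  show "(\<lambda>C. N <#> C) \<in> hom (G Mod M) (G Mod N)" if "N \<in> I" "M \<in> I" "M \<subseteq> N" for N M
    using that normal by (simp add: FactGroup_projection_hom)
  show "N <#> C = C" if "N \<in> I" "C \<in> carrier (G Mod N)" for N C
    using normal.rcosets_mult_eq[OF normal[OF that(1)]] that(2) by (simp add: FactGroup_def)
  show "N <#> (M <#> C) = N <#> C"
    if NMK: "N \<in> I" "M \<in> I" "K \<in> I" "M \<subseteq> N" "K \<subseteq> M" and "C \<in> carrier (G Mod K)"
    for N M K C
  proof -
    obtain g where "g \<in> carrier G" "C = K #> g"
      using \<open>C \<in> carrier (G Mod K)\<close> by (auto simp: carrier_FactGroup)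
    moreover have "subgroup N G" "subgroup M G" "subgroup K G"
      using NMK normal normal_imp_subgroup by blast+
    ultimately show ?thesis
      using NMK by (simp add: set_mult_rcos_absorb)
  qed
qed (use ne in auto)

lemma canonical_hom_inv_lim:
  assumes normal: "\<And>N. N \<in> I \<Longrightarrow> N \<lhd> G"
  shows "(\<lambda>g. \<lambda>N\<in>I. N #> g)
    \<in> hom G (inv_lim_group I (\<lambda>N M. M \<subseteq> N) (\<lambda>N. G Mod N) (\<lambda>N M C. N <#> C))"
    (is "?\<phi> \<in> hom G ?L")
  unfolding hom_def
proof (intro CollectI conjI ballI)
  show "?\<phi> \<in> carrier G \<rightarrow> carrier ?L"
  proof
    fix g assume g: "g \<in> carrier G"
    have "N <#> (M #> g) = N #> g" if "N \<in> I" "M \<in> I" "M \<subseteq> N" for N M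
      using that g normal normal_imp_subgroup set_mult_rcos_absorb by metis
    then show "?\<phi> g \<in> carrier ?L"
      using g by (auto simp: inv_lim_group_def inv_lim_carrier_def carrier_FactGroup)
  qed
  show "?\<phi> (a \<otimes> b) = ?\<phi> a \<otimes>\<^bsub>?L\<^esub> ?\<phi> b" if "a \<in> carrier G" "b \<in> carrier G" for a b
    using that normal by (auto simp: inv_lim_group_def normal.rcos_sum intro!: restrict_ext)
qed

lemma inj_on_canonical_hom:
  assumes normal: "\<And>N. N \<in> I \<Longrightarrow> N \<lhd> G"
    and separating: "\<And>x. x \<in> carrier G \<Longrightarrow> x \<noteq> \<one> \<Longrightarrow> \<exists>N\<in>I. x \<notin> N"
  shows "inj_on (\<lambda>g. \<lambda>N\<in>I. N #> g) (carrier G)"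
proof (rule inj_onI, rule ccontr)
  fix a b assume a: "a \<in> carrier G" and b: "b \<in> carrier G"
    and eq: "(\<lambda>N\<in>I. N #> a) = (\<lambda>N\<in>I. N #> b)" and "a \<noteq> b"
  then obtain N where N: "N \<in> I" "a \<otimes> inv b \<notin> N"
    using separating[of "a \<otimes> inv b"] by (auto simp: inv_solve_right')
  then have "N #> a = N #> b"
    using eq by (metis restrict_apply')
  then have "a \<in> N #> b"
    using a N(1) normal normal_imp_subgroup rcos_self by metis
  then show False
    using N a b normal normal_imp_subgroup subgroup.rcos_module_imp group_axioms by metis
qed

lemma inv_lim_FactGroup_mono:
  assumes normal: "\<And>N. N \<in> I \<Longrightarrow> N \<lhd> G"
    and c: "c \<in> inv_lim_carrier I (\<lambda>N M. M \<subseteq> N) (\<lambda>N. G Mod N) (\<lambda>N M C. N <#> C)"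
    and NM: "N \<in> I" "M \<in> I" "M \<subseteq> N"
  shows "c M \<subseteq> c N"
proof
  fix y assume y: "y \<in> c M"
  have "c M \<in> rcosets M"
    using c NM(2) by (auto simp: inv_lim_carrier_def FactGroup_def)
  then have "y \<in> carrier G"
    using y subgroup.rcosets_carrier[OF normal_imp_subgroup[OF normal[OF NM(2)]] group_axioms]
    by blast
  then have "y = \<one> \<otimes> y"
    by simp
  then have "y \<in> N <#> c M"
    using y subgroup.one_closed[OF normal_imp_subgroup[OF normal[OF NM(1)]]]
    unfolding set_mult_def by blast
  then show "y \<in> c N"
    using c NM by (simp add: inv_lim_carrier_def)
qed

end

section \<open>Compact spaces\<close>

lemma tube_lemma_continuous_map:
  assumes C: "compactin TX C" and y: "y \<in> topspace TY"
    and F: "continuous_map (prod_topology TX TY) TZ F" and U: "openin TZ U"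
    and CU: "\<And>c. c \<in> C \<Longrightarrow> F (c, y) \<in> U"
  obtains W where "openin TY W" "y \<in> W" "\<And>c w. c \<in> C \<Longrightarrow> w \<in> W \<Longrightarrow> F (c, w) \<in> U"
proof -
  let ?P = "{p \<in> topspace (prod_topology TX TY). F p \<in> U}"
  have P: "openin (prod_topology TX TY) ?P"
    using openin_continuous_map_preimage[OF F U] .
  have CP: "C \<times> {y} \<subseteq> ?P"
    using compactin_subset_topspace[OF C] y CU by (auto simp: topspace_prod_topology)
  obtain V W where "openin TY W" "C \<subseteq> V" "y \<in> W" "V \<times> W \<subseteq> ?P"
    using tube_lemma_left[OF P C y CP] by blast
  then show ?thesis
    by (intro that[of W]) auto
qed

lemma totally_disconnected_clopen_nbhd:
  assumes "compact_space TX" "Hausdorff_space TX" "totally_disconnected_space TX"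
    and "openin TX U" "x \<in> U"
  obtains V where "openin TX V" "closedin TX V" "x \<in> V" "V \<subseteq> U"
proof -
  have "separated_between TX {x} (topspace TX - U)"
  proof (rule cut_wire_fence_theorem_gen)
    show "compactin TX {x}"
      using assms openin_subset by fastforce
    show "disjnt C {x} \<or> disjnt C (topspace TX - U)" if "connectedin TX C" for C
      using assms that unfolding totally_disconnected_space_def disjnt_def by blast
  qed (use assms in auto)
  then obtain V where "closedin TX V" "openin TX V" "x \<in> V" "topspace TX - U \<subseteq> topspace TX - V"
    unfolding separated_between by blast
  then show ?thesis
    using that openin_subset by fastforce
qed

lemma compact_space_Inter_directed:
  assumes TX: "compact_space TX" and ne: "I \<noteq> {}"
    and closed: "\<And>i. i \<in> I \<Longrightarrow> closedin TX (F i)" and nonempty: "\<And>i. i \<in> I \<Longrightarrow> F i \<noteq> {}"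
    and directed: "\<And>i j. i \<in> I \<Longrightarrow> j \<in> I \<Longrightarrow> \<exists>k\<in>I. F k \<subseteq> F i \<inter> F j"
  shows "(\<Inter>i\<in>I. F i) \<noteq> {}"
proof -
  have "\<exists>k\<in>I. F k \<subseteq> \<Inter>\<U>" if "finite \<U>" "\<U> \<subseteq> F ` I" for \<U>
    using that
  proof (induction rule: finite_induct)
    case empty
    then show ?case
      using ne by auto
  next
    case (insert U \<U>)
    then obtain i k where "i \<in> I" "U = F i" "k \<in> I" "F k \<subseteq> \<Inter>\<U>"
      by auto
    moreover obtain k' where "k' \<in> I" "F k' \<subseteq> F i \<inter> F k"
      using directed calculation by blast
    ultimately show ?case
      by auto
  qed
  then have "\<Inter>\<U> \<noteq> {}" if "finite \<U>" "\<U> \<subseteq> F ` I" for \<U>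
    using that nonempty by fastforce
  with closed show ?thesis
    by (intro compact_space_fip[THEN iffD1, OF TX, rule_format]) auto
qed

section \<open>Topological groups\<close>

locale top_group = group G for G :: "'a monoid" (structure) +
  fixes T :: "'a topology"
  assumes topological_group: "topological_group G T"
begin

lemma topspace_eq [simp]: "topspace T = carrier G"
  using topological_group by (simp add: topological_group_def)

lemma continuous_map_mult:
  assumes "continuous_map TX T f" "continuous_map TX T g"
  shows "continuous_map TX T (\<lambda>x. f x \<otimes> g x)"
proof -
  have "continuous_map (prod_topology T T) T (\<lambda>(x, y). x \<otimes> y)"
    using topological_group by (simp add: topological_group_def)
  from continuous_map_compose[OF continuous_map_pairedI[OF assms] this] show ?thesis
    by (simp add: o_def)
qed

lemma continuous_map_inv:
  assumes "continuous_map TX T f"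
  shows "continuous_map TX T (\<lambda>x. inv (f x))"
proof -
  have "continuous_map T T (\<lambda>x. inv x)"
    using topological_group by (simp add: topological_group_def)
  from continuous_map_compose[OF assms this] show ?thesis
    by (simp add: o_def)
qed

lemma homeomorphic_map_right_translation:
  assumes "g \<in> carrier G"
  shows "homeomorphic_map T T (\<lambda>x. x \<otimes> g)"
proof (rule homeomorphic_maps_imp_map)
  show "homeomorphic_maps T T (\<lambda>x. x \<otimes> g) (\<lambda>x. x \<otimes> inv g)"
    unfolding homeomorphic_maps_def using assms
    by (auto simp: m_assoc intro!: continuous_map_mult)
qed

lemma openin_rcos_iff:
  assumes "N \<subseteq> carrier G" "g \<in> carrier G"
  shows "openin T (N #> g) \<longleftrightarrow> openin T N"
proof -
  have "N #> g = (\<lambda>x. x \<otimes> g) ` N"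
    by (auto simp: r_coset_def)
  then show ?thesis
    using assms homeomorphic_map_openness[OF homeomorphic_map_right_translation] by simp
qed

lemma closedin_rcos_iff:
  assumes "N \<subseteq> carrier G" "g \<in> carrier G"
  shows "closedin T (N #> g) \<longleftrightarrow> closedin T N"
proof -
  have "N #> g = (\<lambda>x. x \<otimes> g) ` N"
    by (auto simp: r_coset_def)
  then show ?thesis
    using assms homeomorphic_map_closedness[OF homeomorphic_map_right_translation] by simp
qed

lemma openin_subgroupI:
  assumes H: "subgroup H G" and W: "openin T W" "\<one> \<in> W" "W \<subseteq> H"
  shows "openin T H"
proof -
  have "H = (\<Union>h\<in>H. W #> h)"
  proof (intro equalityI subsetI)
    fix x assume "x \<in> H"
    then have "x \<in> W #> x"
      using W H by (force simp: r_coset_def subgroup.mem_carrier)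
    then show "x \<in> (\<Union>h\<in>H. W #> h)"
      using \<open>x \<in> H\<close> by blast
  qed (use W H in \<open>auto simp: r_coset_def subgroup.m_closed\<close>)
  moreover have "openin T (W #> h)" if "h \<in> H" for h
    using that W H openin_subset by (force simp: openin_rcos_iff subgroup.mem_carrier)
  ultimately show ?thesis
    by (metis openin_Union imageE)
qed

lemma openin_rcos_saturated:
  assumes N: "subgroup N G" "openin T N"
    and A: "A \<subseteq> carrier G" "\<And>a. a \<in> A \<Longrightarrow> N #> a \<subseteq> A"
  shows "openin T A"
proof -
  have "A = (\<Union>a\<in>A. N #> a)"
    using A rcos_self[OF _ N(1)] by blast
  moreover have "openin T (N #> a)" if "a \<in> A" for a
    using that A N by (simp add: openin_rcos_iff subgroup.subset subsetD)
  ultimately show ?thesis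
    by (metis openin_Union imageE)
qed

lemma open_subgroup_closedin:
  assumes N: "subgroup N G" "openin T N"
  shows "closedin T N"
proof -
  have "N #> a \<subseteq> carrier G - N" if "a \<in> carrier G - N" for a
  proof
    fix x assume "x \<in> N #> a"
    then obtain n where "n \<in> N" "x = n \<otimes> a"
      unfolding r_coset_def by blast
    moreover have "x \<notin> N" if "n \<in> N" "x = n \<otimes> a"
      using that \<open>a \<in> carrier G - N\<close> N(1)
      by (metis DiffE subgroup.mem_carrier subgroup.m_inv_closed subgroup.m_closed inv_solve_left)
    ultimately show "x \<in> carrier G - N"
      using \<open>a \<in> carrier G - N\<close> N(1) by (auto simp: subgroup.mem_carrier)
  qed
  then have "openin T (carrier G - N)"
    by (intro openin_rcos_saturated[OF N]) auto
  then show ?thesis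
    using N(1) by (simp add: closedin_def subgroup.subset)
qed

lemma closedin_rcosets:
  assumes "subgroup N G" "openin T N" "C \<in> rcosets N"
  shows "closedin T C"
proof -
  obtain g where "g \<in> carrier G" "C = N #> g"
    using assms(3) by (auto simp: RCOSETS_def)
  then show ?thesis
    using assms(1,2) open_subgroup_closedin by (simp add: closedin_rcos_iff subgroup.subset)
qed

lemma continuous_map_rcos:
  assumes N: "subgroup N G" "openin T N"
  shows "continuous_map T (discrete_topology (rcosets N)) (\<lambda>g. N #> g)"
  unfolding continuous_map_def
proof (intro conjI allI impI)
  show "(\<lambda>g. N #> g) \<in> topspace T \<rightarrow> topspace (discrete_topology (rcosets N))"
    using N(1) by (simp add: rcosetsI subgroup.subset)
  fix U
  have "N #> a \<subseteq> {g \<in> carrier G. N #> g \<in> U}" if "a \<in> {g \<in> carrier G. N #> g \<in> U}" for a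
    using that N(1) repr_independence r_coset_subset_G[OF subgroup.subset[OF N(1)]] by fastforce
  then show "openin T {x \<in> topspace T. N #> x \<in> U}"
    by (intro openin_rcos_saturated[OF N]) auto
qed

lemma closed_supplement_shrink:
  assumes H: "subgroup H G" and K: "subgroup K G" "closedin T K" and HK: "H <#> K = carrier G"
    and Q: "C_group Q" "\<psi> \<in> hom G Q" and \<psi>: "continuous_map T (discrete_topology (carrier Q)) \<psi>"
  obtains L where "subgroup L G" "closedin T L" "L \<subseteq> K" "H <#> L = carrier G"
    and "\<And>x. x \<in> H \<inter> L \<Longrightarrow> \<psi> x = \<one>\<^bsub>Q\<^esub>"
proof (rule supplement_shrink_by_complement[OF H K(1) HK Q])
  fix L' assume L': "subgroup L' Q" and HL: "H <#> (K \<inter> \<psi> -` L') = carrier G"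
    and trivial: "\<And>x. x \<in> H \<inter> K \<inter> \<psi> -` L' \<Longrightarrow> \<psi> x = \<one>\<^bsub>Q\<^esub>"
  let ?L = "K \<inter> \<psi> -` L'"
  have "?L = K \<inter> {y \<in> topspace T. \<psi> y \<in> L'}"
    using subgroup.subset[OF K(1)] by auto
  moreover have "closedin T {y \<in> topspace T. \<psi> y \<in> L'}"
    using closedin_continuous_map_preimage[OF \<psi>] subgroup.subset[OF L']
    by (simp add: closedin_discrete_topology)
  ultimately have "closedin T ?L"
    using K(2) by (simp add: closedin_Int)
  moreover have "subgroup ?L G"
  proof -
    have "group_hom G Q \<psi>"
      using Q unfolding C_group_def group_hom_def group_hom_axioms_def
      by (simp add: group_axioms)
    then have "subgroup (carrier G \<inter> \<psi> -` L') G"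
      using L' by (rule group_hom.subgroup_vimage)
    moreover have "?L = K \<inter> (carrier G \<inter> \<psi> -` L')"
      using subgroup.subset[OF K(1)] by auto
    ultimately show ?thesis
      using subgroups_Inter_pair[OF K(1)] by simp
  qed
  ultimately show thesis
    using that[of ?L] HL trivial by blast
qed

lemma C_group_FactGroup_if_open_complements:
  assumes complements: "\<And>H. subgroup H G \<Longrightarrow> openin T H \<Longrightarrow> \<exists>K. perm_complement G H K"
    and N: "N \<lhd> G" "openin T N"
  shows "C_group (G Mod N)"
proof (rule normal.C_group_FactGroupI[OF N(1)])
  fix H assume "subgroup H G" "N \<subseteq> H"
  then have "openin T H"
    using N openin_subgroupI subgroup.one_closed normal_imp_subgroup by metis
  then show "\<exists>K. perm_complement G H K"
    using complements \<open>subgroup H G\<close> by blast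
qed

lemma separating_hom_FactGroup:
  assumes N: "N \<lhd> G" "openin T N" and x: "x \<in> carrier G" "x \<notin> N"
  shows "(\<lambda>g. N #> g) \<in> hom G (G Mod N)"
    and "continuous_map T (discrete_topology (carrier (G Mod N))) (\<lambda>g. N #> g)"
    and "N #> x \<noteq> \<one>\<^bsub>G Mod N\<^esub>"
proof -
  show "(\<lambda>g. N #> g) \<in> hom G (G Mod N)"
    using N(1) by (rule normal.r_coset_hom_Mod)
  show "continuous_map T (discrete_topology (carrier (G Mod N))) (\<lambda>g. N #> g)"
    using continuous_map_rcos[OF normal_imp_subgroup[OF N(1)] N(2)] by (simp add: FactGroup_def)
  show "N #> x \<noteq> \<one>\<^bsub>G Mod N\<^esub>"
    using x rcos_self[OF x(1) normal_imp_subgroup[OF N(1)]] by auto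
qed

lemma separating_hom_inv_lim:
  fixes Gs :: "'i \<Rightarrow> 'b monoid"
  assumes C: "\<And>i. i \<in> I \<Longrightarrow> C_group (Gs i)"
    and \<phi>: "\<phi> \<in> iso G (inv_lim_group I leq Gs f)"
      "continuous_map T (inv_lim_topology I leq Gs f) \<phi>"
    and x: "x \<in> carrier G" "x \<noteq> \<one>"
  shows "\<exists>(Q :: 'b monoid) \<psi>. C_group Q \<and> \<psi> \<in> hom G Q \<and>
    continuous_map T (discrete_topology (carrier Q)) \<psi> \<and> \<psi> x \<noteq> \<one>\<^bsub>Q\<^esub>"
proof -
  let ?L = "inv_lim_group I leq Gs f"
  have "inj_on \<phi> (carrier G)"
    using \<phi>(1) by (simp add: iso_def bij_betw_def)
  then have "\<phi> x \<noteq> \<phi> \<one>"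
    using x by (meson inj_onD one_closed)
  moreover have "\<phi> g \<in> extensional I" if "g \<in> carrier G" for g
  proof -
    have "\<phi> g \<in> carrier ?L"
      using iso_imp_homomorphism[OF \<phi>(1)] that by (auto simp: hom_def)
    then show ?thesis
      by (simp add: inv_lim_group_def inv_lim_carrier_def PiE_def)
  qed
  ultimately obtain i where i: "i \<in> I" "\<phi> x i \<noteq> \<phi> \<one> i"
    using x(1) extensionalityI[of "\<phi> x" I "\<phi> \<one>"] by blast
  have hom: "(\<lambda>g. \<phi> g i) \<in> hom G (Gs i)"
    using Group.hom_compose[OF iso_imp_homomorphism[OF \<phi>(1)] inv_lim_projection_hom[OF i(1)]]
    by (simp add: o_def)
  then have "\<phi> \<one> i = \<one>\<^bsub>Gs i\<^esub>"
    using C[OF i(1)] hom_one[OF hom group_axioms] by (simp add: C_group_def)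
  moreover have "continuous_map T (discrete_topology (carrier (Gs i))) (\<lambda>g. \<phi> g i)"
    using continuous_map_compose[OF \<phi>(2) continuous_map_inv_lim_projection[OF i(1)]]
    by (simp add: o_def)
  ultimately show ?thesis
    using C[OF i(1)] hom i(2) by (intro exI[of _ "Gs i"] exI[of _ "\<lambda>g. \<phi> g i"]) auto
qed

definition open_normal_subgroups :: "'a set set" where
  "open_normal_subgroups = {N. N \<lhd> G \<and> openin T N}"

end

section \<open>Profinite groups\<close>

locale profinite = top_group +
  assumes compact_space: "compact_space T"
    and Hausdorff: "Hausdorff_space T"
    and totally_disconnected: "totally_disconnected_space T"

lemma profiniteI:
  assumes "profinite_group G T"
  shows "profinite G T"
  using assms unfolding profinite_group_def
  by (simp add: profinite_def profinite_axioms_def top_group_def top_group_axioms_def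
      topological_group_def)

context profinite
begin

lemma finite_rcosets:
  assumes "subgroup N G" "openin T N"
  shows "finite (rcosets N)"
proof -
  have "(\<lambda>g. N #> g) ` carrier G = rcosets N"
    by (auto simp: RCOSETS_def)
  then have "compactin (discrete_topology (rcosets N)) (rcosets N)"
    using image_compactin[OF compact_space[unfolded compact_space_def topspace_eq]
        continuous_map_rcos[OF assms]]
    by simp
  then show ?thesis
    by (simp add: compactin_discrete_topology)
qed

lemma open_subgroup_in_clopen:
  assumes V: "openin T V" "closedin T V" "\<one> \<in> V"
  obtains H where "subgroup H G" "openin T H" "H \<subseteq> V"
proof -
  have Vc: "V \<subseteq> carrier G"
    using openin_subset[OF V(1)] by simp
  have mult: "continuous_map (prod_topology T T) T (\<lambda>p. fst p \<otimes> snd p)"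
    by (intro continuous_map_mult continuous_map_fst continuous_map_snd)
  have "v \<otimes> \<one> \<in> V" if "v \<in> V" for v
    using that Vc by auto
  then obtain W where W: "openin T W" "\<one> \<in> W" and VW: "\<And>v w. v \<in> V \<Longrightarrow> w \<in> W \<Longrightarrow> v \<otimes> w \<in> V"
    using tube_lemma_continuous_map[OF closedin_compact_space[OF compact_space V(2)]
        one_closed[folded topspace_eq] mult V(1)]
    by auto
  define W' where "W' = {w \<in> W. inv w \<in> W}"
  have W'_open: "openin T W'"
  proof -
    have "W' = W \<inter> {x \<in> topspace T. inv x \<in> W}"
      using openin_subset[OF W(1)] by (auto simp: W'_def)
    then show ?thesis
      using W(1) openin_continuous_map_preimage[OF continuous_map_inv[OF continuous_map_id]]
      by (simp add: openin_Int)
  qed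
  \<comment> \<open>The right stabiliser of \<open>V\<close> lies inside \<open>V\<close> and contains every \<open>w\<close> with \<open>V w \<subseteq> V\<close>
    and \<open>V w\<inverse> \<subseteq> V\<close>, hence the open set \<open>W'\<close>.\<close>
  let ?H = "{g \<in> carrier G. V #> g = V}"
  have "W' \<subseteq> ?H"
  proof
    fix w assume "w \<in> W'"
    then have w: "w \<in> W" "inv w \<in> W" "w \<in> carrier G"
      using openin_subset[OF W(1)] by (auto simp: W'_def)
    have shrink: "V #> x \<subseteq> V" if "x \<in> W" for x
      using that VW by (auto simp: r_coset_def)
    have "V = (V #> inv w) #> w"
      using w Vc by (simp add: coset_mult_assoc coset_mult_one)
    also have "\<dots> \<subseteq> V #> w"
      using shrink[OF w(2)] by (auto simp: r_coset_def)
    finally show "w \<in> ?H"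
      using shrink[OF w(1)] w(3) by auto
  qed
  moreover have "?H \<subseteq> V"
    using Vc V(3) by (force simp: r_coset_def)
  moreover have "\<one> \<in> W'"
    using W(2) by (simp add: W'_def)
  ultimately show ?thesis
    using that subgroup_rcos_stabilizer[OF Vc] openin_subgroupI[OF _ W'_open] by blast
qed

lemma open_normal_subgroup_in_open_subgroup:
  assumes H: "subgroup H G" "openin T H"
  obtains N where "N \<lhd> G" "openin T N" "N \<subseteq> H"
proof -
  \<comment> \<open>The normal core of \<open>H\<close>; by compactness of \<open>G\<close> it contains a neighbourhood \<open>W\<close> of the
    identity with \<open>c W c\<inverse> \<subseteq> H\<close> for all \<open>c\<close>.\<close>
  let ?N = "{x \<in> carrier G. \<forall>c \<in> carrier G. c \<otimes> x \<otimes> inv c \<in> H}"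
  have conjugation: "continuous_map (prod_topology T T) T (\<lambda>p. fst p \<otimes> snd p \<otimes> inv (fst p))"
    by (intro continuous_map_mult continuous_map_inv continuous_map_fst continuous_map_snd)
  have "c \<otimes> \<one> \<otimes> inv c \<in> H" if "c \<in> carrier G" for c
    using that H(1) by (simp add: subgroup.one_closed)
  then obtain W where W: "openin T W" "\<one> \<in> W"
    and WH: "\<And>c w. c \<in> carrier G \<Longrightarrow> w \<in> W \<Longrightarrow> c \<otimes> w \<otimes> inv c \<in> H"
    using tube_lemma_continuous_map[OF compact_space[unfolded compact_space_def topspace_eq]
        one_closed[folded topspace_eq] conjugation H(2)]
    by auto
  have "W \<subseteq> ?N"
    using WH openin_subset[OF W(1)] by auto
  moreover have "?N \<subseteq> H"
  proof
    fix x assume "x \<in> ?N"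
    then have "\<one> \<otimes> x \<otimes> inv \<one> \<in> H" "x \<in> carrier G"
      by blast+
    then show "x \<in> H"
      by simp
  qed
  moreover have "?N \<lhd> G"
    using normal_core[OF H(1)] .
  ultimately show ?thesis
    using that openin_subgroupI[OF normal_imp_subgroup W] by blast
qed

lemma open_normal_subgroup_nbhd:
  assumes "openin T U" "\<one> \<in> U"
  obtains N where "N \<lhd> G" "openin T N" "N \<subseteq> U"
proof -
  obtain V where "openin T V" "closedin T V" "\<one> \<in> V" "V \<subseteq> U"
    using totally_disconnected_clopen_nbhd[OF compact_space Hausdorff totally_disconnected assms] .
  moreover obtain H where "subgroup H G" "openin T H" "H \<subseteq> V"
    using open_subgroup_in_clopen calculation by blast
  moreover obtain N where "N \<lhd> G" "openin T N" "N \<subseteq> H"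
    using open_normal_subgroup_in_open_subgroup calculation by blast
  ultimately show ?thesis
    using that by blast
qed

lemma open_normal_subgroup_avoiding:
  assumes "x \<in> carrier G" "x \<noteq> \<one>"
  obtains N where "N \<lhd> G" "openin T N" "x \<notin> N"
proof -
  have "closedin T {x}"
    using Hausdorff assms(1) Hausdorff_imp_t1_space t1_space_closedin_singleton by fastforce
  then have "openin T (carrier G - {x})"
    using openin_diff[OF openin_topspace] by fastforce
  then show ?thesis
    using that open_normal_subgroup_nbhd assms by blast
qed

lemma open_normal_subgroups_Int:
  "M \<in> open_normal_subgroups \<Longrightarrow> N \<in> open_normal_subgroups \<Longrightarrow> M \<inter> N \<in> open_normal_subgroups"
  by (auto simp: open_normal_subgroups_def normal_subgroup_intersect)

lemma carrier_in_open_normal_subgroups: "carrier G \<in> open_normal_subgroups"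
  using normal_self openin_topspace[of T] by (simp add: open_normal_subgroups_def)

lemma open_normal_subgroups_nbhd_basis:
  assumes "openin T U" "\<one> \<in> U"
  shows "\<exists>N\<in>open_normal_subgroups. N \<subseteq> U"
proof -
  obtain N where "N \<lhd> G" "openin T N" "N \<subseteq> U"
    using open_normal_subgroup_nbhd[OF assms] by blast
  then show ?thesis
    by (auto simp: open_normal_subgroups_def)
qed

lemma supplement_Inter_chain:
  assumes H: "subgroup H G" "closedin T H" and ne: "\<C> \<noteq> {}"
    and \<C>: "\<And>K. K \<in> \<C> \<Longrightarrow> subgroup K G \<and> closedin T K \<and> H <#> K = carrier G"
    and chain: "\<And>K L. K \<in> \<C> \<Longrightarrow> L \<in> \<C> \<Longrightarrow> K \<subseteq> L \<or> L \<subseteq> K"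
  shows "H <#> \<Inter>\<C> = carrier G"
proof
  have "\<Inter>\<C> \<subseteq> carrier G"
    using ne \<C> subgroup.subset by blast
  then show "H <#> \<Inter>\<C> \<subseteq> carrier G"
    using H(1) by (auto simp: set_mult_def subgroup.mem_carrier)
  show "carrier G \<subseteq> H <#> \<Inter>\<C>"
  proof
    fix g assume g: "g \<in> carrier G"
    have "(\<Inter>K\<in>\<C>. K \<inter> (H #> g)) \<noteq> {}"
    proof (rule compact_space_Inter_directed[OF compact_space ne])
      show "closedin T (K \<inter> (H #> g))" if "K \<in> \<C>" for K
        using \<C>[OF that] H g
        by (intro closedin_Int) (simp_all add: closedin_rcos_iff subgroup.subset)
      show "K \<inter> (H #> g) \<noteq> {}" if K: "K \<in> \<C>" for K
      proof -
        have "g \<in> H <#> K"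
          using \<C>[OF K] g by blast
        then obtain h k where hk: "h \<in> H" "k \<in> K" "g = h \<otimes> k"
          unfolding set_mult_def by blast
        moreover have "h \<in> carrier G" "k \<in> carrier G"
          using hk H(1) \<C>[OF K] by (meson subgroup.mem_carrier)+
        ultimately have "k = inv h \<otimes> g" "inv h \<in> H"
          using H(1) by (simp_all add: m_assoc [symmetric] subgroup.m_inv_closed)
        then show ?thesis
          using hk(2) unfolding r_coset_def by blast
      qed
      show "\<exists>M\<in>\<C>. M \<inter> (H #> g) \<subseteq> (K \<inter> (H #> g)) \<inter> (L \<inter> (H #> g))"
        if "K \<in> \<C>" "L \<in> \<C>" for K L
        using chain[OF that] that by blast
    qed
    then obtain k where k: "k \<in> \<Inter>\<C>" "k \<in> H #> g"
      using ne by blast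
    then obtain h where "h \<in> H" "k = h \<otimes> g"
      unfolding r_coset_def by blast
    moreover have "h \<in> carrier G"
      using \<open>h \<in> H\<close> H(1) by (simp add: subgroup.mem_carrier)
    ultimately have "g = inv h \<otimes> k" "inv h \<in> H"
      using g H(1) by (simp_all add: m_assoc [symmetric] subgroup.m_inv_closed)
    then show "g \<in> H <#> \<Inter>\<C>"
      using k(1) unfolding set_mult_def by blast
  qed
qed

lemma minimal_closed_supplement:
  assumes H: "subgroup H G" "closedin T H"
  obtains K where "subgroup K G" "closedin T K" "H <#> K = carrier G"
    and "\<And>L. subgroup L G \<Longrightarrow> closedin T L \<Longrightarrow> H <#> L = carrier G \<Longrightarrow> L \<subseteq> K \<Longrightarrow> L = K"
proof -
  define \<K> where "\<K> = {K. subgroup K G \<and> closedin T K \<and> H <#> K = carrier G}"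
  have "carrier G \<in> \<K>"
  proof -
    have "H <#> carrier G = carrier G"
    proof
      show "H <#> carrier G \<subseteq> carrier G"
        using H(1) by (auto simp: set_mult_def subgroup.mem_carrier)
      show "carrier G \<subseteq> H <#> carrier G"
        using subgroup.one_closed[OF H(1)] by (force simp: set_mult_def)
    qed
    then show ?thesis
      using subgroup_self closedin_topspace[of T] by (simp add: \<K>_def)
  qed
  have "\<exists>K\<in>\<K>. \<forall>L\<in>\<K>. K \<supseteq> L \<longrightarrow> L = K"
  proof (rule predicate_Zorn)
    show "partial_order_on \<K> (relation_of (\<supseteq>) \<K>)"
      by (auto simp: partial_order_on_def preorder_on_def refl_on_def trans_on_def
          antisym_on_def relation_of_def)
    fix \<C> assume "\<C> \<in> Chains (relation_of (\<supseteq>) \<K>)"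
    then have \<C>: "\<C> \<subseteq> \<K>" and chain: "\<And>K L. K \<in> \<C> \<Longrightarrow> L \<in> \<C> \<Longrightarrow> K \<subseteq> L \<or> L \<subseteq> K"
      by (auto simp: Chains_def relation_of_def)
    show "\<exists>U\<in>\<K>. \<forall>K\<in>\<C>. K \<supseteq> U"
    proof (cases "\<C> = {}")
      case True
      then show ?thesis
        using \<open>carrier G \<in> \<K>\<close> by blast
    next
      case False
      have "\<Inter>\<C> \<in> \<K>"
        using \<C> False supplement_Inter_chain[OF H False _ chain]
        by (auto simp: \<K>_def intro: subgroups_Inter closedin_Inter)
      then show ?thesis
        by blast
    qed
  qed
  then show ?thesis
    using that unfolding \<K>_def by blast
qed

lemma closed_complement_if_separated:
  assumes separated: "\<And>x. x \<in> carrier G \<Longrightarrow> x \<noteq> \<one> \<Longrightarrow>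
      \<exists>(Q :: 'q monoid) \<psi>. C_group Q \<and> \<psi> \<in> hom G Q \<and>
        continuous_map T (discrete_topology (carrier Q)) \<psi> \<and> \<psi> x \<noteq> \<one>\<^bsub>Q\<^esub>"
    and H: "subgroup H G" "closedin T H"
  obtains K where "perm_complement G H K" "closedin T K"
proof (rule minimal_closed_supplement[OF H])
  fix K assume K: "subgroup K G" "closedin T K" and HK: "H <#> K = carrier G"
    and minimal: "\<And>L. subgroup L G \<Longrightarrow> closedin T L \<Longrightarrow> H <#> L = carrier G \<Longrightarrow> L \<subseteq> K \<Longrightarrow> L = K"
  have "H \<inter> K \<subseteq> {\<one>}"
  proof
    fix x assume x: "x \<in> H \<inter> K"
    show "x \<in> {\<one>}"
    proof (rule ccontr)
      assume "x \<notin> {\<one>}"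
      moreover have "x \<in> carrier G"
        using x subgroup.mem_carrier[OF H(1)] by blast
      ultimately obtain Q :: "'q monoid" and \<psi> where Q: "C_group Q" "\<psi> \<in> hom G Q"
        and \<psi>: "continuous_map T (discrete_topology (carrier Q)) \<psi>" "\<psi> x \<noteq> \<one>\<^bsub>Q\<^esub>"
        using separated[of x] by (metis singletonI)
      obtain L where "subgroup L G" "closedin T L" "L \<subseteq> K" "H <#> L = carrier G"
        and trivial: "\<And>y. y \<in> H \<inter> L \<Longrightarrow> \<psi> y = \<one>\<^bsub>Q\<^esub>"
        using closed_supplement_shrink[OF H(1) K HK Q \<psi>(1)] by blast
      then have "L = K"
        using minimal by blast
      then show False
        using trivial x \<psi>(2) by blast
    qed
  qed
  then have "H \<inter> K = {\<one>}"
    using H(1) K(1) subgroup.one_closed by blast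
  then show ?thesis
    using that K HK by (simp add: perm_complement_def)
qed

lemma closed_complement_if_C_quotients:
  assumes C: "\<And>N. N \<lhd> G \<Longrightarrow> openin T N \<Longrightarrow> C_group (G Mod N)"
    and H: "subgroup H G" "closedin T H"
  obtains K where "perm_complement G H K" "closedin T K"
proof (rule closed_complement_if_separated[OF _ H])
  fix x assume x: "x \<in> carrier G" "x \<noteq> \<one>"
  obtain N where N: "N \<lhd> G" "openin T N" "x \<notin> N"
    using open_normal_subgroup_avoiding[OF x] by blast
  show "\<exists>(Q :: 'a set monoid) \<psi>. C_group Q \<and> \<psi> \<in> hom G Q \<and>
      continuous_map T (discrete_topology (carrier Q)) \<psi> \<and> \<psi> x \<noteq> \<one>\<^bsub>Q\<^esub>"
    using C[OF N(1,2)] separating_hom_FactGroup[OF N(1,2) x(1) N(3)] by blast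
qed (rule that)

lemma closed_complement_if_inv_lim:
  assumes "inv_lim_of_finite_C_groups G T TYPE('i) TYPE('b)"
    and H: "subgroup H G" "closedin T H"
  obtains K where "perm_complement G H K" "closedin T K"
proof -
  obtain I :: "'i set" and leq and Gs :: "'i \<Rightarrow> 'b monoid" and f \<phi>
    where C: "\<And>i. i \<in> I \<Longrightarrow> C_group (Gs i)" and \<phi>: "\<phi> \<in> iso G (inv_lim_group I leq Gs f)"
      and homeo: "homeomorphic_map T (inv_lim_topology I leq Gs f) \<phi>"
    using assms(1) unfolding inv_lim_of_finite_C_groups_def by blast
  show ?thesis
  proof (rule closed_complement_if_separated[OF _ H])
    show "\<exists>(Q :: 'b monoid) \<psi>. C_group Q \<and> \<psi> \<in> hom G Q \<and>
        continuous_map T (discrete_topology (carrier Q)) \<psi> \<and> \<psi> x \<noteq> \<one>\<^bsub>Q\<^esub>"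
      if "x \<in> carrier G" "x \<noteq> \<one>" for x
      using separating_hom_inv_lim[OF C \<phi> homeomorphic_imp_continuous_map[OF homeo] that] .
  qed (rule that)
qed

lemma inv_lim_FactGroup_eq_rcos:
  assumes c: "c \<in> inv_lim_carrier open_normal_subgroups
    (\<lambda>N M. M \<subseteq> N) (\<lambda>N. G Mod N) (\<lambda>N M C. N <#> C)"
  shows "\<exists>g\<in>carrier G. \<forall>N\<in>open_normal_subgroups. c N = N #> g"
proof -
  let ?I = open_normal_subgroups
  have N: "N \<lhd> G" "subgroup N G" "openin T N" if "N \<in> ?I" for N
    using that normal_imp_subgroup by (auto simp: open_normal_subgroups_def)
  have coset: "c N \<in> rcosets N" if "N \<in> ?I" for N
    using c that by (auto simp: inv_lim_carrier_def FactGroup_def)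
  have "(\<Inter>N\<in>?I. c N) \<noteq> {}"
  proof (rule compact_space_Inter_directed[OF compact_space])
    show "?I \<noteq> {}"
      using carrier_in_open_normal_subgroups by blast
    show "closedin T (c N)" and "c N \<noteq> {}" if "N \<in> ?I" for N
      using closedin_rcosets[OF N(2,3) coset] subgroup.rcosets_non_empty[OF N(2) coset] that
      by blast+
    show "\<exists>K\<in>?I. c K \<subseteq> c N \<inter> c M" if "N \<in> ?I" "M \<in> ?I" for N M
      using that inv_lim_FactGroup_mono[OF N(1) c] open_normal_subgroups_Int
      by (metis Int_lower1 Int_lower2 le_inf_iff)
  qed
  then obtain g where g: "\<And>N. N \<in> ?I \<Longrightarrow> g \<in> c N"
    by blast
  have "c N = N #> g" if "N \<in> ?I" for N
    using coset[OF that] g[OF that] repr_independence N(2)[OF that] by (auto simp: RCOSETS_def)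
  moreover have "g \<in> carrier G"
    using g coset N(2) subgroup.rcosets_carrier[OF _ group_axioms] carrier_in_open_normal_subgroups
    by blast
  ultimately show ?thesis
    by blast
qed

lemma canonical_hom_onto:
  "(\<lambda>g. \<lambda>N\<in>open_normal_subgroups. N #> g) ` carrier G
    = inv_lim_carrier open_normal_subgroups (\<lambda>N M. M \<subseteq> N) (\<lambda>N. G Mod N) (\<lambda>N M C. N <#> C)"
    (is "?\<phi> ` carrier G = ?L")
proof
  show "?\<phi> ` carrier G \<subseteq> ?L"
    using canonical_hom_inv_lim[of open_normal_subgroups]
    by (auto simp: hom_def inv_lim_group_def open_normal_subgroups_def)
  show "?L \<subseteq> ?\<phi> ` carrier G"
  proof
    fix c assume c: "c \<in> ?L"
    then obtain g where "g \<in> carrier G" "\<forall>N\<in>open_normal_subgroups. c N = N #> g"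
      using inv_lim_FactGroup_eq_rcos by blast
    moreover have "c \<in> extensional open_normal_subgroups"
      using c by (simp add: inv_lim_carrier_def PiE_def)
    ultimately show "c \<in> ?\<phi> ` carrier G"
      by (intro image_eqI[where x = g]) (auto intro: extensionalityI)
  qed
qed

lemma continuous_map_canonical_hom:
  "continuous_map T
    (inv_lim_topology open_normal_subgroups (\<lambda>N M. M \<subseteq> N) (\<lambda>N. G Mod N) (\<lambda>N M C. N <#> C))
    (\<lambda>g. \<lambda>N\<in>open_normal_subgroups. N #> g)"
  unfolding inv_lim_topology_def continuous_map_in_subtopology
proof
  show "continuous_map T
      (product_topology (\<lambda>N. discrete_topology (carrier (G Mod N))) open_normal_subgroups)
      (\<lambda>g. \<lambda>N\<in>open_normal_subgroups. N #> g)"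
    unfolding continuous_map_componentwise
    using continuous_map_rcos normal_imp_subgroup
    by (auto simp: open_normal_subgroups_def FactGroup_def)
  show "(\<lambda>g. \<lambda>N\<in>open_normal_subgroups. N #> g) \<in> topspace T
      \<rightarrow> inv_lim_carrier open_normal_subgroups (\<lambda>N M. M \<subseteq> N) (\<lambda>N. G Mod N) (\<lambda>N M C. N <#> C)"
    using canonical_hom_onto by auto
qed

lemma inv_lim_of_finite_C_groups_if_C_quotients:
  assumes C: "\<And>N. N \<lhd> G \<Longrightarrow> openin T N \<Longrightarrow> C_group (G Mod N)"
  shows "inv_lim_of_finite_C_groups G T TYPE('a set) TYPE('a set)"
proof -
  let ?I = open_normal_subgroups
  let ?\<phi> = "\<lambda>g. \<lambda>N\<in>?I. N #> g"
  let ?L = "inv_lim_group ?I (\<lambda>N M. M \<subseteq> N) (\<lambda>N. G Mod N) (\<lambda>N M C. N <#> C)"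
  let ?LT = "inv_lim_topology ?I (\<lambda>N M. M \<subseteq> N) (\<lambda>N. G Mod N) (\<lambda>N M C. N <#> C)"
  have normal: "\<And>N. N \<in> ?I \<Longrightarrow> N \<lhd> G"
    by (simp add: open_normal_subgroups_def)
  have system: "inverse_system ?I (\<lambda>N M. M \<subseteq> N) (\<lambda>N. G Mod N) (\<lambda>N M C. N <#> C)"
    using inverse_system_FactGroup carrier_in_open_normal_subgroups open_normal_subgroups_Int normal
    by blast
  have finite_C: "\<forall>N\<in>?I. finite (carrier (G Mod N)) \<and> C_group (G Mod N)"
    using C finite_rcosets normal_imp_subgroup
    by (auto simp: open_normal_subgroups_def FactGroup_def)
  have "\<exists>N\<in>?I. x \<notin> N" if x: "x \<in> carrier G" "x \<noteq> \<one>" for x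
  proof -
    obtain N where "N \<lhd> G" "openin T N" "x \<notin> N"
      using open_normal_subgroup_avoiding[OF x] by blast
    then show ?thesis
      by (auto simp: open_normal_subgroups_def)
  qed
  then have "inj_on ?\<phi> (carrier G)"
    by (intro inj_on_canonical_hom normal)
  then have iso: "?\<phi> \<in> iso G ?L"
    using canonical_hom_inv_lim[OF normal] canonical_hom_onto
    by (simp add: iso_def bij_betw_def inv_lim_group_def)
  have "topspace ?LT = inv_lim_carrier ?I (\<lambda>N M. M \<subseteq> N) (\<lambda>N. G Mod N) (\<lambda>N M C. N <#> C)"
    by (auto simp: inv_lim_topology_def inv_lim_carrier_def topspace_product_topology)
  then have "homeomorphic_map T ?LT ?\<phi>"
    using \<open>inj_on ?\<phi> (carrier G)\<close> canonical_hom_onto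
      continuous_imp_closed_map[OF continuous_map_canonical_hom compact_space
        Hausdorff_space_inv_lim_topology]
    by (intro bijective_closed_imp_homeomorphic_map continuous_map_canonical_hom) auto
  then show ?thesis
    unfolding inv_lim_of_finite_C_groups_def using system finite_C iso by blast
qed

end

theorem theoremA:
  fixes G :: "'a monoid" and T :: "'a topology"
  assumes "profinite_group G T"
  defines "P1 \<equiv> (\<forall>H. subgroup H G \<and> closedin T H \<longrightarrow>
                     (\<exists>K. perm_complement G H K \<and> closedin T K))"
      and "P2 \<equiv> (\<forall>H. subgroup H G \<and> closedin T H \<longrightarrow> (\<exists>K. perm_complement G H K))"
      and "P3 \<equiv> (\<forall>H. subgroup H G \<and> openin T H \<longrightarrow> (\<exists>K. perm_complement G H K))"
      and "P4 \<equiv> (\<forall>H. subgroup H G \<and> openin T H \<longrightarrow>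
                     (\<exists>K. perm_complement G H K \<and> closedin T K))"
      and "P5 \<equiv> (\<forall>\<N>. ((\<forall>N\<in>\<N>. N \<lhd> G \<and> openin T N) \<and>
                       (\<forall>U. openin T U \<and> \<one>\<^bsub>G\<^esub> \<in> U \<longrightarrow> (\<exists>N\<in>\<N>. N \<subseteq> U)))
                   \<longrightarrow> (\<forall>N\<in>\<N>. C_group (G Mod N)))"
  shows "(P1 \<longleftrightarrow> P2) \<and> (P2 \<longleftrightarrow> P3) \<and> (P3 \<longleftrightarrow> P4) \<and> (P4 \<longleftrightarrow> P5) \<and>
         (P5 \<longleftrightarrow> inv_lim_of_finite_C_groups G T TYPE('a set) TYPE('a set)) \<and>
         (inv_lim_of_finite_C_groups G T TYPE('i) TYPE('b) \<longrightarrow> P1)"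
proof -
  interpret profinite G T
    using assms(1) by (rule profiniteI)
  let ?Q = "\<forall>N. N \<lhd> G \<and> openin T N \<longrightarrow> C_group (G Mod N)"
  have "P1 \<Longrightarrow> P2" and "P4 \<Longrightarrow> P3" and "?Q \<Longrightarrow> P5"
    unfolding P1_def P2_def P3_def P4_def P5_def by blast+
  moreover have "P1 \<Longrightarrow> P4" and "P2 \<Longrightarrow> P3"
    unfolding P1_def P2_def P3_def P4_def using open_subgroup_closedin by blast+
  moreover have "P3 \<Longrightarrow> ?Q"
    unfolding P3_def using C_group_FactGroup_if_open_complements by blast
  moreover have "P5 \<Longrightarrow> ?Q"
    unfolding P5_def using open_normal_subgroups_nbhd_basis
    by (auto simp: open_normal_subgroups_def dest!: spec[of _ open_normal_subgroups])
  moreover have "?Q \<Longrightarrow> P1"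
    unfolding P1_def using closed_complement_if_C_quotients by metis
  moreover have "?Q \<Longrightarrow> inv_lim_of_finite_C_groups G T TYPE('a set) TYPE('a set)"
    using inv_lim_of_finite_C_groups_if_C_quotients by blast
  moreover have "inv_lim_of_finite_C_groups G T TYPE('i) TYPE('b) \<Longrightarrow> P1"
    and "inv_lim_of_finite_C_groups G T TYPE('a set) TYPE('a set) \<Longrightarrow> P1"
    unfolding P1_def using closed_complement_if_inv_lim by metis+
  ultimately show ?thesis
    by blast
qed

end
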